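(* Let $D$ be a crossing optimal normalized 2-page book drawing of $K_n$. Then the edges corresponding to the entries $(\lfloor n/2\rfloor,\lceil n/2\rceil+1)$, $(\lfloor n/2\rfloor,\lfloor n/2\rfloor+1)$ and $(\lceil n/2\rceil,\lceil n/2\rceil+1)$ of $M(D)$ are halving edges, i.e. $(\lfloor n/2\rfloor-1)$-edges.
   Context: Normalized 2-page book drawing of $K_n$: vertices $(1,0),\dots,(n,0)$ labelled $1,\dots,n$; edges $i(i+1)$ on the spine; edge $1n$ in the upper half-plane; every other edge $ij$ a semicircle over $[i,j]$ in the upper or lower half-plane. $M(D)$ has entries $(i,j)$, $1\le i<j\le n$, entry $(i,j)$ corresponding to edge $ij$. For distinct vertices $p,q,r$, $r$ is on the left (right) of $\overrightarrow{pq}$ if the triangle with edges $pq,qr,rp$ traced in order $p,q,r$ is counterclockwise (clockwise); an edge is a $k$-edge if exactly $k$ of the other $n-2$ vertices lie on one side of it. Crossing optimal: exactly $Z(n)=\frac14\lfloor\frac n2\rfloor\lfloor\frac{n-1}2\rfloor\lfloor\frac{n-2}2\rfloor\lfloor\frac{n-3}2\rfloor$ crossings. *)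

theory Defs
  imports Complex_Main
begin

text \<open>A normalized 2-page book drawing of K_n is determined by the page of each
non-spine edge ij (1 <= i, i+2 <= j <= n): upper (up i j = True) or lower
(up i j = False). Spine edges i(i+1) lie on the spine; edge 1n is upper.\<close>

definition normalized_2page :: "nat \<Rightarrow> (nat \<Rightarrow> nat \<Rightarrow> bool) \<Rightarrow> bool" where
  "normalized_2page n up \<longleftrightarrow> 3 \<le> n \<and> up 1 n"

text \<open>Two edges ij and kl cross iff they lie on the same page and interleave,
i < k < j < l (semicircles; spine edges cross nothing).\<close>

definition crossings :: "nat \<Rightarrow> (nat \<Rightarrow> nat \<Rightarrow> bool) \<Rightarrow> nat" where
  "crossings n up = card {(i, k, j, l). 1 \<le> i \<and> i < k \<and> k < j \<and> j < l \<and> l \<le> n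
                                        \<and> up i j = up k l}"

definition Z :: "nat \<Rightarrow> real" where
  "Z n = (1/4) * real (n div 2) * real ((n - 1) div 2) * real ((n - 2) div 2) * real ((n - 3) div 2)"

definition crossing_optimal :: "nat \<Rightarrow> (nat \<Rightarrow> nat \<Rightarrow> bool) \<Rightarrow> bool" where
  "crossing_optimal n up \<longleftrightarrow> real (crossings n up) = Z n"

text \<open>For a < b < c the closed curve a -> b -> c -> a goes left to right along the
spine/inner arcs and returns along the arc ac, which encloses them; hence it is
counterclockwise iff edge ac is in the upper page. Cyclic shifts preserve, and
transpositions reverse, the orientation.\<close>

definition ccw :: "(nat \<Rightarrow> nat \<Rightarrow> bool) \<Rightarrow> nat \<Rightarrow> nat \<Rightarrow> nat \<Rightarrow> bool" where
  "ccw up p q r =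
     (let a = min p (min q r); c = max p (max q r) in
      if (p < q \<and> q < r) \<or> (q < r \<and> r < p) \<or> (r < p \<and> p < q) then up a c else \<not> up a c)"

definition left_of :: "nat \<Rightarrow> (nat \<Rightarrow> nat \<Rightarrow> bool) \<Rightarrow> nat \<Rightarrow> nat \<Rightarrow> nat set" where
  "left_of n up p q = {r \<in> {1..n}. r \<noteq> p \<and> r \<noteq> q \<and> ccw up p q r}"

definition right_of :: "nat \<Rightarrow> (nat \<Rightarrow> nat \<Rightarrow> bool) \<Rightarrow> nat \<Rightarrow> nat \<Rightarrow> nat set" where
  "right_of n up p q = {r \<in> {1..n}. r \<noteq> p \<and> r \<noteq> q \<and> \<not> ccw up p q r}"

definition is_k_edge :: "nat \<Rightarrow> (nat \<Rightarrow> nat \<Rightarrow> bool) \<Rightarrow> nat \<Rightarrow> nat \<Rightarrow> nat \<Rightarrow> bool" where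
  "is_k_edge n up k p q \<longleftrightarrow> card (left_of n up p q) = k \<or> card (right_of n up p q) = k"

definition halving_edge :: "nat \<Rightarrow> (nat \<Rightarrow> nat \<Rightarrow> bool) \<Rightarrow> nat \<Rightarrow> nat \<Rightarrow> bool" where
  "halving_edge n up p q \<longleftrightarrow> is_k_edge n up (n div 2 - 1) p q"

end

theory Submission
  imports Defs
begin

text \<open>
  For an edge pq with L vertices on its left, count the pairs of other vertices lying on a
  common side of pq. Adding the vertices one at a time along the spine gives
  cr(D) + 3 C(n,4) = sum over all edges pq of C(L,2) + C(n-2-L,2). Expanding each summand
  around the balanced value K = floor(n/2) - 1 expresses the right-hand side through the
  deficits W(u) = sum over pq of max(0, u - k_pq), where k_pq = min(L, n-2-L). They obey the
  <=k-edge bound 2 W(u) >= u(u+1)(u+2): remove the last spine vertex, and count the edges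
  whose k does not change by removing the first one. These bounds add up to exactly
  cr(D) >= Z(n). Both inductions can carry one distinguished edge pq with
  floor(n/2) <= p < q <= n - K along; if it is not halving it contributes one more unit,
  so cr(D) > Z(n).
\<close>

lemma bij_betw_insert_shift:
  fixes f g :: "'a \<Rightarrow> nat"
  assumes g: "bij_betw g S {..<m}" and "a \<notin> S"
    and shift: "\<And>p. p \<in> S \<Longrightarrow> f p = g p + of_bool P"
    and fa: "f a = (if P then 0 else m)"
  shows "bij_betw f (insert a S) {..<Suc m}"
proof -
  have "bij_betw (\<lambda>j. j + of_bool P) {..<m} ((\<lambda>j. j + of_bool P) ` {..<m})"
    by (simp add: inj_on_def bij_betw_imageI)
  then have "bij_betw ((\<lambda>j. j + of_bool P) \<circ> g) S ((\<lambda>j. j + of_bool P) ` {..<m})"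
    by (rule bij_betw_trans[OF g])
  then have "bij_betw f S ((\<lambda>j. j + of_bool P) ` {..<m})"
    by (subst bij_betw_cong[where g = "(\<lambda>j. j + of_bool P) \<circ> g"]) (simp_all add: shift)
  then have "bij_betw f (S \<union> {a}) ((\<lambda>j. j + of_bool P) ` {..<m} \<union> {f a})"
    using \<open>a \<notin> S\<close> fa by (intro notIn_Un_bij_betw) auto
  moreover have "(\<lambda>j. j + of_bool P) ` {..<m} \<union> {f a} = {..<Suc m}"
    by (cases P) (auto simp: fa image_Suc_lessThan)
  ultimately show ?thesis by simp
qed

lemma sum_nested_mono_strict:
  fixes f g :: "'a \<Rightarrow> 'b \<Rightarrow> nat"
  assumes "finite A" "\<And>x. finite (B x)" "\<And>x y. x \<in> A \<Longrightarrow> y \<in> B x \<Longrightarrow> f x y \<le> g x y"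
  shows "(\<Sum>x\<in>A. \<Sum>y\<in>B x. f x y) + of_bool (x0 \<in> A \<and> y0 \<in> B x0 \<and> f x0 y0 < g x0 y0)
           \<le> (\<Sum>x\<in>A. \<Sum>y\<in>B x. g x y)"
proof (cases "x0 \<in> A \<and> y0 \<in> B x0 \<and> f x0 y0 < g x0 y0")
  case True
  have "(\<Sum>y\<in>B x0. f x0 y) < (\<Sum>y\<in>B x0. g x0 y)"
    using True assms by (intro sum_strict_mono_ex1) auto
  then have "(\<Sum>x\<in>A. \<Sum>y\<in>B x. f x y) < (\<Sum>x\<in>A. \<Sum>y\<in>B x. g x y)"
    using True assms by (intro sum_strict_mono_ex1) (auto intro: sum_mono)
  then show ?thesis
    using True by simp
next
  case False
  then have "of_bool (x0 \<in> A \<and> y0 \<in> B x0 \<and> f x0 y0 < g x0 y0) = (0::nat)"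
    by simp
  moreover have "(\<Sum>x\<in>A. \<Sum>y\<in>B x. f x y) \<le> (\<Sum>x\<in>A. \<Sum>y\<in>B x. g x y)"
    using assms by (intro sum_mono) auto
  ultimately show ?thesis
    by (metis add_0_right)
qed

lemma card_increasing_pairs: "card {(i, k). 1 \<le> i \<and> i < k \<and> k \<le> N} = N choose 2"
proof (induction N)
  case 0
  have "{(i, k). 1 \<le> i \<and> i < k \<and> k \<le> (0::nat)} = {}"
    by auto
  then show ?case
    by (simp only: card.empty) simp
next
  case (Suc N)
  let ?P = "\<lambda>N. {(i, k). 1 \<le> i \<and> i < k \<and> k \<le> N}"
  have "finite (?P N)"
    by (rule finite_subset[of _ "{0..N} \<times> {0..N}"]) auto
  then have "card (?P N \<union> (\<lambda>i. (i, Suc N)) ` {1..N})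
               = card (?P N) + card ((\<lambda>i. (i, Suc N)) ` {1..N})"
    by (intro card_Un_disjoint) auto
  moreover have "?P (Suc N) = ?P N \<union> (\<lambda>i. (i, Suc N)) ` {1..N}"
    by (auto simp: le_Suc_eq)
  ultimately have "card (?P (Suc N)) = card (?P N) + card ((\<lambda>i. (i, Suc N)) ` {1..N})"
    by simp
  also have "card ((\<lambda>i. (i, Suc N)) ` {1..N}) = N"
    by (simp add: card_image inj_on_def)
  finally show ?case
    using Suc.IH by (simp add: numeral_2_eq_2)
qed

lemma card_increasing_triples: "card {(i, k, j). 1 \<le> i \<and> i < k \<and> k < j \<and> j \<le> N} = N choose 3"
proof (induction N)
  case 0
  have "{(i, k, j). 1 \<le> i \<and> i < k \<and> k < j \<and> j \<le> (0::nat)} = {}"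
    by auto
  then show ?case
    by (simp only: card.empty) simp
next
  case (Suc N)
  let ?T = "\<lambda>N. {(i, k, j). 1 \<le> i \<and> i < k \<and> k < j \<and> j \<le> N}"
  let ?P = "{(i, k). 1 \<le> i \<and> i < k \<and> k \<le> N}"
  have "finite (?T N)"
    by (rule finite_subset[of _ "{0..N} \<times> {0..N} \<times> {0..N}"]) auto
  moreover have "finite ?P"
    by (rule finite_subset[of _ "{0..N} \<times> {0..N}"]) auto
  ultimately have "card (?T N \<union> (\<lambda>(i, k). (i, k, Suc N)) ` ?P)
               = card (?T N) + card ((\<lambda>(i, k). (i, k, Suc N)) ` ?P)"
    by (intro card_Un_disjoint) auto
  moreover have "?T (Suc N) = ?T N \<union> (\<lambda>(i, k). (i, k, Suc N)) ` ?P"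
    by (auto simp: le_Suc_eq)
  ultimately have "card (?T (Suc N)) = card (?T N) + card ((\<lambda>(i, k). (i, k, Suc N)) ` ?P)"
    by simp
  also have "card ((\<lambda>(i, k). (i, k, Suc N)) ` ?P) = N choose 2"
    using card_increasing_pairs[of N] by (simp add: card_image inj_on_def)
  finally show ?case
    using Suc.IH by (simp add: numeral_3_eq_3 numeral_2_eq_2)
qed

lemma card_increasing_triples_eq_sum:
  fixes N :: nat
  shows "card {(i, k, j). 1 \<le> i \<and> i < k \<and> k < j \<and> j \<le> N \<and> P i k j}
     = (\<Sum>j=1..N. \<Sum>k=1..N. \<Sum>i=1..N. if i < k \<and> k < j \<and> P i k j then 1 else 0)"
proof -
  let ?A = "{1..N} \<times> {1..N} \<times> {1..N}"
  let ?Q = "\<lambda>(i, k, j). i < k \<and> k < j \<and> P i k j"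
  have "{(i, k, j). 1 \<le> i \<and> i < k \<and> k < j \<and> j \<le> N \<and> P i k j} = {t \<in> ?A. ?Q t}"
    by auto
  then have "card {(i, k, j). 1 \<le> i \<and> i < k \<and> k < j \<and> j \<le> N \<and> P i k j}
               = (\<Sum>t\<in>?A. if ?Q t then 1 else 0)"
    by (simp only: card_eq_sum sum.inter_filter[symmetric] finite_cartesian_product finite_atLeastAtMost)
  also have "\<dots> = (\<Sum>i=1..N. \<Sum>k=1..N. \<Sum>j=1..N. if i < k \<and> k < j \<and> P i k j then 1 else 0)"
    by (simp add: sum.cartesian_product case_prod_unfold)
  also have "\<dots> = (\<Sum>i=1..N. \<Sum>j=1..N. \<Sum>k=1..N. if i < k \<and> k < j \<and> P i k j then 1 else 0)"
    by (rule sum.cong[OF refl], rule sum.swap)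
  also have "\<dots> = (\<Sum>j=1..N. \<Sum>i=1..N. \<Sum>k=1..N. if i < k \<and> k < j \<and> P i k j then 1 else 0)"
    by (rule sum.swap)
  also have "\<dots> = (\<Sum>j=1..N. \<Sum>k=1..N. \<Sum>i=1..N. if i < k \<and> k < j \<and> P i k j then 1 else 0)"
    by (rule sum.cong[OF refl], rule sum.swap)
  finally show ?thesis .
qed

lemma card_increasing_triples_split:
  fixes N :: nat
  shows "card {(i, k, j). 1 \<le> i \<and> i < k \<and> k < j \<and> j \<le> N \<and> P i k j}
           + card {(i, k, j). 1 \<le> i \<and> i < k \<and> k < j \<and> j \<le> N \<and> \<not> P i k j} = N choose 3"
proof -
  let ?A = "{(i, k, j). 1 \<le> i \<and> i < k \<and> k < j \<and> j \<le> N \<and> P i k j}"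
  let ?B = "{(i, k, j). 1 \<le> i \<and> i < k \<and> k < j \<and> j \<le> N \<and> \<not> P i k j}"
  have "finite {(i, k, j). 1 \<le> i \<and> i < k \<and> k < j \<and> j \<le> N}"
    by (rule finite_subset[of _ "{0..N} \<times> {0..N} \<times> {0..N}"]) auto
  then have fin: "finite X" if "X \<subseteq> {(i, k, j). 1 \<le> i \<and> i < k \<and> k < j \<and> j \<le> N}" for X
    using that by (rule rev_finite_subset)
  have "card ?A + card ?B = card (?A \<union> ?B)"
    by (rule card_Un_disjoint[symmetric]) (auto intro: fin)
  also have "?A \<union> ?B = {(i, k, j). 1 \<le> i \<and> i < k \<and> k < j \<and> j \<le> N}"
    by auto
  also have "card \<dots> = N choose 3"
    by (rule card_increasing_triples)
  finally show ?thesis .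
qed

lemma sum_choose2_lessThan: "(\<Sum>j<n. j choose 2) = n choose 3"
  by (induction n) (simp_all add: numeral_3_eq_3 numeral_2_eq_2)

lemma sum_Suc_diff_lessThan:
  assumes "u < N"
  shows "2 * (\<Sum>j<N. Suc u - j) = (u + 1) * (u + 2)"
  using assms
proof (induction u)
  case 0
  have "(\<Sum>j<N. Suc 0 - j) = (\<Sum>j\<in>{0}. Suc 0 - j)"
    using 0 by (intro sum.mono_neutral_right) auto
  then show ?case
    by simp
next
  case (Suc u)
  have "(\<Sum>j<N. Suc (Suc u) - j) = (\<Sum>j<N. (Suc u - j) + of_bool (j \<le> Suc u))"
    by (intro sum.cong refl) auto
  also have "\<dots> = (\<Sum>j<N. Suc u - j) + card ({..<N} \<inter> {..Suc u})"
    by (simp add: sum.distrib atMost_def)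
  also have "{..<N} \<inter> {..Suc u} = {..Suc u}"
    using Suc.prems by auto
  finally show ?case
    using Suc by simp
qed

lemma sum_lessThan_diff_eq_choose2: "(\<Sum>u<K. u - k) = (K - k) choose 2"
proof (induction K)
  case (Suc K)
  show ?case
  proof (cases "k \<le> K")
    case True
    then have "Suc K - k = Suc (K - k)"
      by simp
    then show ?thesis
      using Suc True by (simp add: numeral_2_eq_2)
  next
    case False
    then have "Suc K - k = 0 \<or> Suc K - k = 1"
      by auto
    then show ?thesis
      using Suc False by auto
  qed
qed simp

lemma sum_consecutive_triple_products: "4 * (\<Sum>u<K. u * (u + 1) * (u + 2)) = (K - 1) * K * (K + 1) * (K + (2::nat))"
proof (induction K)
  case (Suc K)
  then show ?case
    by (cases K) (simp_all add: algebra_simps)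
qed simp

lemma sum_pairs_const: "(\<Sum>q=1..n. \<Sum>p=1..<q. c) = (n choose 2) * (c::nat)"
  by (induction n) (simp_all add: numeral_2_eq_2 algebra_simps)

lemma choose2_real: "real (a choose 2) = real a * (real a - 1) / 2"
  by (induction a) (auto simp: numeral_2_eq_2 algebra_simps add_divide_distrib)

lemma choose3_real: "real (a choose 3) = real a * (real a - 1) * (real a - 2) / 6"
proof (induction a)
  case (Suc a)
  have "Suc a choose 3 = (a choose 2) + (a choose 3)"
    by (simp add: numeral_3_eq_3 numeral_2_eq_2)
  then show ?case
    using Suc choose2_real[of a] by (simp add: field_simps)
qed simp

lemma choose4_real: "real (a choose 4) = real a * (real a - 1) * (real a - 2) * (real a - 3) / 24"
proof (induction a)
  case (Suc a)
  have "Suc a choose 4 = (a choose 3) + (a choose 4)"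
    by (simp add: eval_nat_numeral)
  then show ?case
    using Suc choose3_real[of a] by (simp add: field_simps)
qed simp

section \<open>Sides of an edge\<close>

text \<open>For p < q the orientation of p q r is read off the page of the longest of the edges pq, qr, rp.\<close>

definition left_of_edge :: "(nat \<Rightarrow> nat \<Rightarrow> bool) \<Rightarrow> nat \<Rightarrow> nat \<Rightarrow> nat \<Rightarrow> bool" where
  "left_of_edge up p q r = (if r < p then up r q else if r < q then \<not> up p q else up p r)"

lemma ccw_eq_left_of_edge:
  assumes "p < q" "r \<noteq> p" "r \<noteq> q"
  shows "ccw up p q r = left_of_edge up p q r"
  using assms unfolding ccw_def left_of_edge_def Let_def by (auto simp: min_def max_def)

definition left_count :: "(nat \<Rightarrow> nat \<Rightarrow> bool) \<Rightarrow> nat \<Rightarrow> nat \<Rightarrow> nat \<Rightarrow> nat \<Rightarrow> nat" where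
  "left_count up a b p q = (\<Sum>r=a..b. if r \<noteq> p \<and> r \<noteq> q \<and> left_of_edge up p q r then 1 else 0)"

text \<open>The k of the edge pq in the subdrawing induced by the spine vertices a, ..., b.\<close>

definition edge_k :: "(nat \<Rightarrow> nat \<Rightarrow> bool) \<Rightarrow> nat \<Rightarrow> nat \<Rightarrow> nat \<Rightarrow> nat \<Rightarrow> nat" where
  "edge_k up a b p q = min (left_count up a b p q) (b - Suc a - left_count up a b p q)"

lemma left_count_add_right_count:
  assumes "a \<le> p" "p < q" "q \<le> b"
  shows "left_count up a b p q
           + (\<Sum>r=a..b. if r \<noteq> p \<and> r \<noteq> q \<and> \<not> left_of_edge up p q r then 1 else 0) = b - Suc a"
proof -
  have "left_count up a b p q
          + (\<Sum>r=a..b. if r \<noteq> p \<and> r \<noteq> q \<and> \<not> left_of_edge up p q r then 1 else 0)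
        = (\<Sum>r\<in>{a..b} - {p, q}. 1)"
    unfolding left_count_def sum.distrib[symmetric] by (rule sum.mono_neutral_cong_right) auto
  also have "\<dots> = b - Suc a"
    using assms by (simp add: card_Diff_subset)
  finally show ?thesis .
qed

lemma left_count_le:
  assumes "a \<le> p" "p < q" "q \<le> b"
  shows "left_count up a b p q \<le> b - Suc a"
  using left_count_add_right_count[OF assms, of up] by linarith

lemma card_left_of:
  assumes "1 \<le> p" "p < q" "q \<le> n"
  shows "card (left_of n up p q) = left_count up 1 n p q"
proof -
  have "left_of n up p q = {1..n} \<inter> {r. r \<noteq> p \<and> r \<noteq> q \<and> left_of_edge up p q r}"
    unfolding left_of_def using ccw_eq_left_of_edge[OF assms(2)] by auto
  then show ?thesis
    by (simp add: left_count_def sum.If_cases)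
qed

lemma card_right_of:
  assumes "1 \<le> p" "p < q" "q \<le> n"
  shows "card (right_of n up p q) = n - 2 - left_count up 1 n p q"
proof -
  have "right_of n up p q = {1..n} \<inter> {r. r \<noteq> p \<and> r \<noteq> q \<and> \<not> left_of_edge up p q r}"
    unfolding right_of_def using ccw_eq_left_of_edge[OF assms(2)] by auto
  then show ?thesis
    using left_count_add_right_count[OF assms, of up] by (simp add: sum.If_cases)
qed

lemma left_count_Suc_right:
  assumes "a \<le> p" "p < q" "q \<le> b"
  shows "left_count up a (Suc b) p q = left_count up a b p q + of_bool (up p (Suc b))"
  using assms by (simp add: left_count_def left_of_edge_def)

lemma left_count_Suc_left:
  assumes "a < p" "p < q" "q \<le> b"
  shows "left_count up a b p q = left_count up (Suc a) b p q + of_bool (up a q)"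
  using assms by (simp add: left_count_def left_of_edge_def sum.atLeast_Suc_atMost)

lemma left_count_endpoints:
  assumes "a < b"
  shows "left_count up a b a b = (if up a b then 0 else b - Suc a)"
proof -
  have "left_count up a b a b = (\<Sum>r\<in>{a<..<b}. if \<not> up a b then 1 else 0)"
    unfolding left_count_def by (rule sum.mono_neutral_cong_right) (auto simp: left_of_edge_def)
  then show ?thesis by simp
qed

lemma left_count_last_bij:
  assumes "a \<le> b"
  shows "bij_betw (\<lambda>p. left_count up a b p b) {a..<b} {..<b - a}"
  using assms
proof (induction a rule: inc_induct)
  case (step a)
  have "bij_betw (\<lambda>p. left_count up a b p b) (insert a {Suc a..<b}) {..<Suc (b - Suc a)}"
    using step by (intro bij_betw_insert_shift[where P = "up a b"])
      (simp_all add: left_count_Suc_left left_count_endpoints)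
  moreover have "insert a {Suc a..<b} = {a..<b}" "Suc (b - Suc a) = b - a"
    using step by auto
  ultimately show ?case by simp
qed (simp add: bij_betw_def)

lemma left_count_first_bij:
  assumes "a \<le> b"
  shows "bij_betw (\<lambda>q. left_count up a b a q) {Suc a..b} {..<b - a}"
  using assms
proof (induction b rule: dec_induct)
  case (step b)
  have "bij_betw (\<lambda>q. left_count up a (Suc b) a q) (insert (Suc b) {Suc a..b}) {..<Suc (b - a)}"
    using step by (intro bij_betw_insert_shift[where P = "up a (Suc b)"])
      (simp_all add: left_count_Suc_right left_count_endpoints)
  moreover have "insert (Suc b) {Suc a..b} = {Suc a..Suc b}" "Suc (b - a) = Suc b - a"
    using step by auto
  ultimately show ?case by simp
qed (simp add: bij_betw_def)

section \<open>Crossings and same-side pairs\<close>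

definition same_side_pairs :: "nat \<Rightarrow> nat \<Rightarrow> nat" where
  "same_side_pairs n L = (L choose 2) + ((n - 2 - L) choose 2)"

definition crossings_at :: "(nat \<Rightarrow> nat \<Rightarrow> bool) \<Rightarrow> nat \<Rightarrow> nat \<Rightarrow> nat" where
  "crossings_at up v N = card {(i, k, j). 1 \<le> i \<and> i < k \<and> k < j \<and> j \<le> N \<and> up i j = up k v}"

lemma crossings_Suc: "crossings (Suc n) up = crossings n up + crossings_at up (Suc n) n"
proof -
  define C where "C N = {(i, k, j, l). 1 \<le> i \<and> i < k \<and> k < j \<and> j < l \<and> l \<le> N \<and> up i j = up k l}"
    for N :: nat
  define T where "T = {(i, k, j). 1 \<le> i \<and> i < k \<and> k < j \<and> j \<le> n \<and> up i j = up k (Suc n)}"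
  have fin: "finite (C N)" for N
    by (rule finite_subset[of _ "{0..N} \<times> {0..N} \<times> {0..N} \<times> {0..N}"]) (auto simp: C_def)
  have "finite T"
    by (rule finite_subset[of _ "{0..n} \<times> {0..n} \<times> {0..n}"]) (auto simp: T_def)
  have "C (Suc n) = C n \<union> (\<lambda>(i, k, j). (i, k, j, Suc n)) ` T"
    unfolding C_def T_def by (auto simp: image_iff le_Suc_eq)
  moreover have "C n \<inter> (\<lambda>(i, k, j). (i, k, j, Suc n)) ` T = {}"
    unfolding C_def T_def by auto
  moreover have "inj_on (\<lambda>(i, k, j). (i, k, j, Suc n)) T"
    by (auto simp: inj_on_def)
  ultimately have "card (C (Suc n)) = card (C n) + card T"
    using fin \<open>finite T\<close> by (simp add: card_Un_disjoint card_image)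
  then show ?thesis
    unfolding crossings_def crossings_at_def C_def T_def by simp
qed

lemma sum_count_same_side:
  assumes "N < v"
  shows "(\<Sum>q=1..N. \<Sum>p=1..<q. \<Sum>r=1..N.
            if r \<noteq> p \<and> r \<noteq> q \<and> left_of_edge up p q r = left_of_edge up p q v then 1 else 0)
         = crossings_at up v N + (N choose 3)"
proof -
  \<comment> \<open>r < p gives a crossing of rq with pv; the cases p < r < q and q < r together count every triple once\<close>
  let ?g1 = "\<lambda>q p r. if r < p \<and> p < q \<and> up r q = up p v then 1 else (0::nat)"
  let ?g2 = "\<lambda>q p r. if p < r \<and> r < q \<and> up p q \<noteq> up p v then 1 else (0::nat)"
  let ?g3 = "\<lambda>q p r. if p < q \<and> q < r \<and> up p r = up p v then 1 else (0::nat)"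
  let ?T = "\<lambda>P. card {(i, k, j). 1 \<le> i \<and> i < k \<and> k < j \<and> j \<le> N \<and> P i k j}"
  have "(\<Sum>q=1..N. \<Sum>p=1..<q. \<Sum>r=1..N.
            if r \<noteq> p \<and> r \<noteq> q \<and> left_of_edge up p q r = left_of_edge up p q v then 1 else 0)
        = (\<Sum>q=1..N. \<Sum>p=1..<q. \<Sum>r=1..N. ?g1 q p r + ?g2 q p r + ?g3 q p r)"
    using assms by (intro sum.cong refl) (auto simp: left_of_edge_def)
  also have "\<dots> = (\<Sum>q=1..N. \<Sum>p=1..N. \<Sum>r=1..N. ?g1 q p r + ?g2 q p r + ?g3 q p r)"
    by (intro sum.cong refl sum.mono_neutral_left) auto
  also have "\<dots> = (\<Sum>q=1..N. \<Sum>p=1..N. \<Sum>r=1..N. ?g1 q p r)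
      + (\<Sum>q=1..N. \<Sum>p=1..N. \<Sum>r=1..N. ?g2 q p r) + (\<Sum>q=1..N. \<Sum>p=1..N. \<Sum>r=1..N. ?g3 q p r)"
    by (simp add: sum.distrib)
  also have "(\<Sum>q=1..N. \<Sum>p=1..N. \<Sum>r=1..N. ?g1 q p r) = crossings_at up v N"
    unfolding crossings_at_def card_increasing_triples_eq_sum ..
  also have "(\<Sum>q=1..N. \<Sum>p=1..N. \<Sum>r=1..N. ?g2 q p r) = ?T (\<lambda>i k j. \<not> up i j = up i v)"
    unfolding card_increasing_triples_eq_sum by (rule sum.cong[OF refl], rule sum.swap)
  also have "(\<Sum>q=1..N. \<Sum>p=1..N. \<Sum>r=1..N. ?g3 q p r)
      = (\<Sum>q=1..N. \<Sum>r=1..N. \<Sum>p=1..N. ?g3 q p r)"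
    by (rule sum.cong[OF refl], rule sum.swap)
  also have "\<dots> = ?T (\<lambda>i k j. up i j = up i v)"
    unfolding card_increasing_triples_eq_sum by (rule sum.swap)
  finally show ?thesis
    using card_increasing_triples_split[of N "\<lambda>i k j. up i j = up i v"] by simp
qed

lemma same_side_pairs_Suc:
  assumes "1 \<le> p" "p < q" "q \<le> n"
  shows "same_side_pairs (Suc n) (left_count up 1 (Suc n) p q) = same_side_pairs n (left_count up 1 n p q)
     + (\<Sum>r=1..n. if r \<noteq> p \<and> r \<noteq> q \<and> left_of_edge up p q r = left_of_edge up p q (Suc n) then 1 else 0)"
proof -
  define L where "L = left_count up 1 n p q"
  have side: "left_of_edge up p q (Suc n) = up p (Suc n)"
    using assms by (simp add: left_of_edge_def)
  have L: "left_count up 1 (Suc n) p q = L + of_bool (up p (Suc n))"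
    unfolding L_def using assms by (rule left_count_Suc_right)
  have R: "L + (\<Sum>r=1..n. if r \<noteq> p \<and> r \<noteq> q \<and> \<not> left_of_edge up p q r then 1 else 0) = n - 2"
    unfolding L_def using left_count_add_right_count[OF assms] by (simp add: numeral_2_eq_2)
  show ?thesis
  proof (cases "up p (Suc n)")
    case True
    have S: "(\<Sum>r=1..n. if r \<noteq> p \<and> r \<noteq> q \<and> left_of_edge up p q r = left_of_edge up p q (Suc n) then 1 else 0) = L"
      unfolding L_def left_count_def side using True by simp
    have "Suc n - 2 - (L + 1) = n - 2 - L"
      by simp
    then show ?thesis
      unfolding L L_def[symmetric] S using True by (simp add: same_side_pairs_def numeral_2_eq_2)
  next
    case False
    have "Suc n - 2 - L = Suc (n - 2 - L)"
      using R by (simp add: numeral_2_eq_2) (use assms in linarith)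
    then show ?thesis
      unfolding L L_def[symmetric] side using False R by (simp add: same_side_pairs_def numeral_2_eq_2)
  qed
qed

lemma sum_same_side_pairs_last_vertex:
  "(\<Sum>p=1..<Suc n. same_side_pairs (Suc n) (left_count up 1 (Suc n) p (Suc n))) = 2 * (n choose 3)"
proof -
  have "(\<Sum>p=1..<Suc n. same_side_pairs (Suc n) (left_count up 1 (Suc n) p (Suc n)))
          = (\<Sum>j<n. same_side_pairs (Suc n) j)"
  proof (rule sum.reindex_bij_betw)
    show "bij_betw (\<lambda>p. left_count up 1 (Suc n) p (Suc n)) {1..<Suc n} {..<n}"
      using left_count_last_bij[of 1 "Suc n" up] by simp
  qed
  also have "\<dots> = (\<Sum>j<n. j choose 2) + (\<Sum>j<n. (n - Suc j) choose 2)"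
    by (simp add: same_side_pairs_def sum.distrib)
  also have "(\<Sum>j<n. (n - Suc j) choose 2) = (\<Sum>j<n. j choose 2)"
    by (rule sum.nat_diff_reindex)
  finally show ?thesis
    by (simp add: sum_choose2_lessThan)
qed

lemma crossings_add_choose4:
  "crossings n up + 3 * (n choose 4) = (\<Sum>q=1..n. \<Sum>p=1..<q. same_side_pairs n (left_count up 1 n p q))"
proof (induction n)
  case 0
  have "{(i, k, j, l). 1 \<le> i \<and> i < k \<and> k < j \<and> j < l \<and> l \<le> (0::nat) \<and> up i j = up k l} = {}"
    by auto
  then have "crossings 0 up = 0"
    unfolding crossings_def by (metis card.empty)
  then show ?case
    by simp
next
  case (Suc n)
  have "(\<Sum>q=1..Suc n. \<Sum>p=1..<q. same_side_pairs (Suc n) (left_count up 1 (Suc n) p q))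
          = (\<Sum>q=1..n. \<Sum>p=1..<q. same_side_pairs (Suc n) (left_count up 1 (Suc n) p q))
            + (\<Sum>p=1..<Suc n. same_side_pairs (Suc n) (left_count up 1 (Suc n) p (Suc n)))"
    by (simp add: sum.cl_ivl_Suc)
  also have "(\<Sum>q=1..n. \<Sum>p=1..<q. same_side_pairs (Suc n) (left_count up 1 (Suc n) p q))
      = (\<Sum>q=1..n. \<Sum>p=1..<q. same_side_pairs n (left_count up 1 n p q))
        + (\<Sum>q=1..n. \<Sum>p=1..<q. \<Sum>r=1..n.
             if r \<noteq> p \<and> r \<noteq> q \<and> left_of_edge up p q r = left_of_edge up p q (Suc n) then 1 else 0)"
    unfolding sum.distrib[symmetric] by (intro sum.cong refl same_side_pairs_Suc) auto
  finally show ?case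
    using Suc.IH crossings_Suc[of n up] sum_same_side_pairs_last_vertex[of n up] sum_count_same_side[of n "Suc n" up]
    by (simp add: eval_nat_numeral)
qed

section \<open>The lower bound for k-deficits\<close>

definition k_stable_below :: "(nat \<Rightarrow> nat \<Rightarrow> bool) \<Rightarrow> nat \<Rightarrow> nat \<Rightarrow> nat \<Rightarrow> nat \<Rightarrow> nat \<Rightarrow> bool" where
  "k_stable_below up v a b p q \<longleftrightarrow> edge_k up a b p q < v \<and> edge_k up a (Suc b) p q = edge_k up a b p q"

definition stable_edges :: "(nat \<Rightarrow> nat \<Rightarrow> bool) \<Rightarrow> nat \<Rightarrow> nat \<Rightarrow> nat \<Rightarrow> nat" where
  "stable_edges up v a b = (\<Sum>q=a..b. \<Sum>p=a..<q. if k_stable_below up v a b p q then 1 else 0)"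

text \<open>As v - k = card {j. k \<le> j \<and> j < v} in nat, k_deficit v sums, over j < v, the numbers of
  (\<le>j)-edges of the subdrawing on a, ..., b.\<close>

definition k_deficit :: "(nat \<Rightarrow> nat \<Rightarrow> bool) \<Rightarrow> nat \<Rightarrow> nat \<Rightarrow> nat \<Rightarrow> nat" where
  "k_deficit up v a b = (\<Sum>q=a..b. \<Sum>p=a..<q. v - edge_k up a b p q)"

lemma edge_k_Suc_cases:
  assumes "a \<le> p" "p < q" "q \<le> b"
  shows "edge_k up a (Suc b) p q = edge_k up a b p q \<or> edge_k up a (Suc b) p q = Suc (edge_k up a b p q)"
proof -
  have "left_count up a b p q \<le> b - Suc a" "Suc b - Suc a = Suc (b - Suc a)"
    using left_count_le[OF assms] assms by auto
  then show ?thesis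
    unfolding edge_k_def left_count_Suc_right[OF assms] by (cases "up p (Suc b)") (auto simp: min_def)
qed

lemma edge_k_deficit_Suc:
  assumes "a \<le> p" "p < q" "q \<le> b"
  shows "Suc u - edge_k up a (Suc b) p q = (u - edge_k up a b p q) + of_bool (k_stable_below up (Suc u) a b p q)"
  using edge_k_Suc_cases[OF assms, of up] unfolding k_stable_below_def by auto

lemma k_deficit_Suc:
  assumes "a \<le> b"
  shows "k_deficit up (Suc u) a (Suc b) = k_deficit up u a b
           + (\<Sum>p=a..b. Suc u - edge_k up a (Suc b) p (Suc b)) + stable_edges up (Suc u) a b"
proof -
  have "k_deficit up (Suc u) a (Suc b) = (\<Sum>q=a..b. \<Sum>p=a..<q. Suc u - edge_k up a (Suc b) p q)
          + (\<Sum>p=a..<Suc b. Suc u - edge_k up a (Suc b) p (Suc b))"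
    unfolding k_deficit_def using assms by (simp add: sum.cl_ivl_Suc)
  also have "(\<Sum>q=a..b. \<Sum>p=a..<q. Suc u - edge_k up a (Suc b) p q)
      = (\<Sum>q=a..b. \<Sum>p=a..<q. (u - edge_k up a b p q) + of_bool (k_stable_below up (Suc u) a b p q))"
    by (intro sum.cong refl) (simp add: edge_k_deficit_Suc)
  also have "\<dots> = k_deficit up u a b + stable_edges up (Suc u) a b"
    unfolding k_deficit_def stable_edges_def by (simp add: sum.distrib of_bool_def)
  also have "{a..<Suc b} = {a..b}"
    by auto
  finally show ?thesis
    by simp
qed

lemma sum_Suc_diff_min_complement:
  assumes "2 * u < M"
  shows "(\<Sum>j<Suc M. Suc u - min j (M - j)) = (u + 1) * (u + 2)"
proof -
  have "(\<Sum>j<Suc M. Suc u - min j (M - j)) = (\<Sum>j<Suc M. (Suc u - j) + (Suc u - (M - j)))"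
    using assms by (intro sum.cong refl) (auto simp: min_def)
  also have "\<dots> = (\<Sum>j<Suc M. Suc u - j) + (\<Sum>j<Suc M. Suc u - (Suc M - Suc j))"
    by (simp add: sum.distrib)
  also have "(\<Sum>j<Suc M. Suc u - (Suc M - Suc j)) = (\<Sum>j<Suc M. Suc u - j)"
    by (rule sum.nat_diff_reindex)
  finally show ?thesis
    using sum_Suc_diff_lessThan[of u "Suc M"] assms by simp
qed

lemma sum_edge_k_deficit_last_vertex:
  assumes "a \<le> b" "2 * Suc u \<le> b - a + 1"
  shows "(\<Sum>p=a..b. Suc u - edge_k up a (Suc b) p (Suc b)) = (u + 1) * (u + 2)"
proof -
  have "(\<Sum>p=a..b. Suc u - edge_k up a (Suc b) p (Suc b))
          = (\<Sum>p\<in>{a..<Suc b}. (\<lambda>j. Suc u - min j (b - a - j)) (left_count up a (Suc b) p (Suc b)))"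
    unfolding edge_k_def by (intro sum.cong) auto
  also have "\<dots> = (\<Sum>j<Suc (b - a). Suc u - min j (b - a - j))"
  proof (rule sum.reindex_bij_betw)
    show "bij_betw (\<lambda>p. left_count up a (Suc b) p (Suc b)) {a..<Suc b} {..<Suc (b - a)}"
      using left_count_last_bij[of a "Suc b" up] assms by (simp add: Suc_diff_le)
  qed
  finally show ?thesis
    using sum_Suc_diff_min_complement[of u "b - a"] assms by simp
qed

lemma count_stable_left_counts:
  fixes M v :: nat
  assumes "2 * v \<le> M + 1"
  shows "(\<Sum>j<M. if min j (M - 1 - j) < v
                    \<and> min (j + of_bool P) (M - (j + of_bool P)) = min j (M - 1 - j) then 1 else 0) = v"
proof -
  have "(\<Sum>j<M. if min j (M - 1 - j) < v
                  \<and> min (j + of_bool P) (M - (j + of_bool P)) = min j (M - 1 - j) then 1 else 0)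
        = card {j \<in> {..<M}. min j (M - 1 - j) < v
                  \<and> min (j + of_bool P) (M - (j + of_bool P)) = min j (M - 1 - j)}"
    unfolding card_eq_sum by (rule sum.inter_filter[symmetric]) simp
  also have "{j \<in> {..<M}. min j (M - 1 - j) < v
                  \<and> min (j + of_bool P) (M - (j + of_bool P)) = min j (M - 1 - j)}
             = (if P then {M - v..<M} else {..<v})"
    using assms by (auto simp: min_def split: if_splits)
  finally show ?thesis
    using assms by simp
qed

lemma stable_edges_at_first_vertex:
  assumes "a \<le> b" "2 * v \<le> b - a + 1"
  shows "(\<Sum>q=Suc a..b. if k_stable_below up v a b a q then 1 else 0) = v"
proof -
  define P where "P = up a (Suc b)"
  define h where "h j = (if min j (b - a - 1 - j) < v
      \<and> min (j + of_bool P) (b - a - (j + of_bool P)) = min j (b - a - 1 - j) then 1 else (0::nat))" for j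
  have "(\<Sum>q=Suc a..b. if k_stable_below up v a b a q then 1 else 0) = (\<Sum>q=Suc a..b. h (left_count up a b a q))"
  proof (intro sum.cong refl)
    fix q
    assume "q \<in> {Suc a..b}"
    \<comment> \<open>the new vertex b + 1 is on the same side of every edge a q\<close>
    then have "left_count up a (Suc b) a q = left_count up a b a q + of_bool P"
      unfolding P_def by (intro left_count_Suc_right) auto
    with \<open>q \<in> {Suc a..b}\<close> show "(if k_stable_below up v a b a q then 1 else 0) = h (left_count up a b a q)"
      unfolding h_def k_stable_below_def edge_k_def by (simp add: Suc_diff_Suc)
  qed
  also have "\<dots> = (\<Sum>j<b - a. h j)"
    using assms by (intro sum.reindex_bij_betw left_count_first_bij) simp
  also have "\<dots> = v"
    unfolding h_def using count_stable_left_counts[of v "b - a" P] assms by simp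
  finally show ?thesis .
qed

lemma stable_edges_drop_first_vertex:
  assumes "a \<le> b" "2 * v \<le> b - a + 1"
  shows "stable_edges up v a b
           = v + (\<Sum>q=Suc a..b. \<Sum>p=Suc a..<q. if k_stable_below up v a b p q then 1 else 0)"
proof -
  have "stable_edges up v a b = (\<Sum>q=Suc a..b. \<Sum>p=a..<q. if k_stable_below up v a b p q then 1 else 0)"
    unfolding stable_edges_def using assms by (simp add: sum.atLeast_Suc_atMost)
  also have "\<dots> = (\<Sum>q=Suc a..b. (if k_stable_below up v a b a q then 1 else 0)
                     + (\<Sum>p=Suc a..<q. if k_stable_below up v a b p q then 1 else 0))"
    by (intro sum.cong refl) (simp add: sum.atLeast_Suc_lessThan)
  finally show ?thesis
    using stable_edges_at_first_vertex[OF assms, of up] by (simp add: sum.distrib)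
qed

lemma min_complement_shift_stable:
  fixes L M u :: nat
  assumes "L \<le> M" "2 * u \<le> M + 1"
    and "min L (M - L) < u" "min (L + of_bool B) (M + 1 - (L + of_bool B)) = min L (M - L)"
  shows "min (L + of_bool A) (M + 1 - (L + of_bool A)) < Suc u
    \<and> min (L + of_bool A + of_bool B) (M + 2 - (L + of_bool A + of_bool B))
        = min (L + of_bool A) (M + 1 - (L + of_bool A))"
  using assms by (cases A; cases B) (auto simp: min_def split: if_splits)

lemma k_stable_below_Suc_first:
  assumes "Suc a \<le> p" "p < q" "q \<le> b" "2 * Suc u \<le> b - a + 1"
    and "k_stable_below up u (Suc a) b p q"
  shows "k_stable_below up (Suc u) a b p q"
proof -
  define L where "L = left_count up (Suc a) b p q"
  define M where "M = b - Suc (Suc a)"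
  have L_a: "left_count up a b p q = L + of_bool (up a q)"
    unfolding L_def using assms by (intro left_count_Suc_left) auto
  have L_b: "left_count up (Suc a) (Suc b) p q = L + of_bool (up p (Suc b))"
    unfolding L_def using assms by (intro left_count_Suc_right) auto
  have L_ab: "left_count up a (Suc b) p q = L + of_bool (up a q) + of_bool (up p (Suc b))"
    using assms L_a by (simp add: left_count_Suc_right)
  have "L \<le> M"
    unfolding L_def M_def using assms by (intro left_count_le) auto
  have M: "b - Suc a = M + 1" "Suc b - Suc a = M + 2" "Suc b - Suc (Suc a) = M + 1"
    using assms unfolding M_def by auto
  have "min L (M - L) < u" "min (L + of_bool (up p (Suc b))) (M + 1 - (L + of_bool (up p (Suc b)))) = min L (M - L)"
    using assms(5) unfolding k_stable_below_def edge_k_def L_b M by (simp_all add: L_def M_def)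
  moreover have "2 * u \<le> M + 1"
    using assms(4) M by simp
  ultimately show ?thesis
    unfolding k_stable_below_def edge_k_def L_a L_ab M
    using min_complement_shift_stable[OF \<open>L \<le> M\<close>] by blast
qed

lemma stable_edges_lower_bound:
  assumes "2 * v \<le> b - a + 1"
  shows "v * (v + 1) + 2 * of_bool (a + v \<le> p \<and> p < q \<and> q \<le> b \<and> k_stable_below up v a b p q)
           \<le> 2 * stable_edges up v a b"
  using assms
proof (induction v arbitrary: a)
  case 0
  then show ?case
    by (simp add: k_stable_below_def)
next
  case (Suc v)
  let ?old = "\<lambda>p q. k_stable_below up v (Suc a) b p q"
  let ?new = "\<lambda>p q. k_stable_below up (Suc v) a b p q"
  let ?edge = "Suc a + v \<le> p \<and> p < q \<and> q \<le> b"
  define S where "S = (\<Sum>q=Suc a..b. \<Sum>p=Suc a..<q. if ?new p q then 1 else (0::nat))"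
  have "a \<le> b"
    using Suc.prems by simp
  then have split: "stable_edges up (Suc v) a b = Suc v + S"
    unfolding S_def using Suc.prems by (rule stable_edges_drop_first_vertex)
  have "(\<Sum>q=Suc a..b. \<Sum>p=Suc a..<q. if ?old p q then 1 else 0)
          + of_bool (q \<in> {Suc a..b} \<and> p \<in> {Suc a..<q}
                     \<and> (if ?old p q then 1 else 0) < (if ?new p q then 1 else (0::nat))) \<le> S"
    unfolding S_def using k_stable_below_Suc_first[of a _ _ b v up] Suc.prems
    by (intro sum_nested_mono_strict) auto
  then have mono: "stable_edges up v (Suc a) b + of_bool (?edge \<and> \<not> ?old p q \<and> ?new p q) \<le> S"
    unfolding stable_edges_def by (rule order_trans[rotated]) auto
  have IH: "v * (v + 1) + 2 * of_bool (?edge \<and> ?old p q) \<le> 2 * stable_edges up v (Suc a) b"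
    using Suc.IH[of "Suc a"] Suc.prems by simp
  have "of_bool (?edge \<and> ?new p q)
          \<le> of_bool (?edge \<and> ?old p q) + (of_bool (?edge \<and> \<not> ?old p q \<and> ?new p q) :: nat)"
    by simp
  then show ?case
    using split mono IH by simp
qed

lemma k_deficit_lower_bound_strict:
  assumes "2 * v \<le> b - a"
  shows "v * (v + 1) * (v + 2) + 2 * of_bool (a + v \<le> p \<and> p < q \<and> q + v \<le> b \<and> edge_k up a b p q < v)
           \<le> 2 * k_deficit up v a b"
  using assms
proof (induction v arbitrary: b)
  case 0
  then show ?case
    by simp
next
  case (Suc v)
  obtain b' where b: "b = Suc b'"
    using Suc.prems by (cases b) auto
  have "a \<le> b'" "2 * Suc v \<le> b' - a + 1"
    using Suc.prems b by auto
  then have split: "k_deficit up (Suc v) a b = k_deficit up v a b' + (v + 1) * (v + 2) + stable_edges up (Suc v) a b'"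
    unfolding b by (simp add: k_deficit_Suc sum_edge_k_deficit_last_vertex)
  have IH: "v * (v + 1) * (v + 2) + 2 * of_bool (a + v \<le> p \<and> p < q \<and> q + v \<le> b' \<and> edge_k up a b' p q < v)
              \<le> 2 * k_deficit up v a b'"
    using Suc.IH[of b'] Suc.prems b by simp
  have stable: "(v + 1) * (v + 2) + 2 * of_bool (a + Suc v \<le> p \<and> p < q \<and> q \<le> b' \<and> k_stable_below up (Suc v) a b' p q)
                  \<le> 2 * stable_edges up (Suc v) a b'"
    using stable_edges_lower_bound[of "Suc v" b' a p q up] \<open>2 * Suc v \<le> b' - a + 1\<close> by simp
  have "of_bool (a + Suc v \<le> p \<and> p < q \<and> q + Suc v \<le> b \<and> edge_k up a b p q < Suc v)
          \<le> of_bool (a + v \<le> p \<and> p < q \<and> q + v \<le> b' \<and> edge_k up a b' p q < v)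
            + (of_bool (a + Suc v \<le> p \<and> p < q \<and> q \<le> b' \<and> k_stable_below up (Suc v) a b' p q) :: nat)"
    using edge_k_Suc_cases[of a p q b' up] unfolding b k_stable_below_def by auto
  then show ?case
    using split IH stable by (simp add: algebra_simps)
qed

corollary k_deficit_lower_bound:
  assumes "2 * v \<le> b - a"
  shows "v * (v + 1) * (v + 2) \<le> 2 * k_deficit up v a b"
  using k_deficit_lower_bound_strict[OF assms, of 0 0 up] by simp

lemma sum_k_deficit_lower_bound:
  assumes "2 * K \<le> b - a"
  shows "(K - 1) * K * (K + 1) * (K + 2) \<le> 8 * (\<Sum>u<K. k_deficit up u a b)"
proof -
  have "4 * (\<Sum>u<K. u * (u + 1) * (u + 2)) \<le> 4 * (\<Sum>u<K. 2 * k_deficit up u a b)"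
    using assms by (intro mult_le_mono2 sum_mono k_deficit_lower_bound) auto
  then show ?thesis
    unfolding sum_consecutive_triple_products by (simp add: sum_distrib_left)
qed

section \<open>Crossing-optimal drawings\<close>

lemma same_side_pairs_balanced:
  assumes "L \<le> n - 2"
  defines "K \<equiv> (n - 2) div 2"
  shows "same_side_pairs n L = same_side_pairs n K + 2 * ((K - min L (n - 2 - L)) choose 2)
           + (n - 2 - 2 * K + 1) * (K - min L (n - 2 - L))"
proof -
  define m where "m = n - 2"
  define k where "k = min L (m - L)"
  have "k \<le> K" "2 * K \<le> m"
    unfolding k_def K_def m_def by auto
  have "m - (m - L) = L"
    using assms unfolding m_def by simp
  then have sym: "same_side_pairs n L = (k choose 2) + ((m - k) choose 2)"
    unfolding same_side_pairs_def k_def m_def[symmetric] by (auto simp: min_def)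
  have diff: "real (m - k) = real m - real k" "real (m - K) = real m - real K"
    "real (K - k) = real K - real k" "real (m - 2 * K) = real m - 2 * real K"
    using \<open>k \<le> K\<close> \<open>2 * K \<le> m\<close> by auto
  have "real ((k choose 2) + ((m - k) choose 2))
          = real k * (real k - 1) / 2 + (real m - real k) * (real m - real k - 1) / 2"
    by (simp only: of_nat_add choose2_real diff)
  also have "\<dots> = real K * (real K - 1) / 2 + (real m - real K) * (real m - real K - 1) / 2
      + 2 * ((real K - real k) * (real K - real k - 1) / 2) + (real m - 2 * real K + 1) * (real K - real k)"
    by (simp add: field_simps)
  also have "\<dots> = real ((K choose 2) + ((m - K) choose 2) + 2 * ((K - k) choose 2) + (m - 2 * K + 1) * (K - k))"
    by (simp only: of_nat_add of_nat_mult choose2_real diff of_nat_numeral of_nat_1)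
  finally have "(k choose 2) + ((m - k) choose 2)
                  = (K choose 2) + ((m - K) choose 2) + 2 * ((K - k) choose 2) + (m - 2 * K + 1) * (K - k)"
    by (simp only: of_nat_eq_iff)
  with sym show ?thesis
    unfolding same_side_pairs_def m_def[symmetric] k_def[symmetric] by simp
qed

lemma crossings_eq_k_deficits:
  fixes n :: nat
  defines "K \<equiv> (n - 2) div 2"
  shows "crossings n up + 3 * (n choose 4) = (n choose 2) * same_side_pairs n K
           + 2 * (\<Sum>u<K. k_deficit up u 1 n) + (n - 2 - 2 * K + 1) * k_deficit up K 1 n"
proof -
  let ?k = "\<lambda>p q. edge_k up 1 n p q"
  let ?c = "n - 2 - 2 * K + 1"
  have balanced: "same_side_pairs n (left_count up 1 n p q)
          = same_side_pairs n K + 2 * ((K - ?k p q) choose 2) + ?c * (K - ?k p q)"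
    if "q \<in> {1..n}" "p \<in> {1..<q}" for p q
    unfolding K_def edge_k_def Suc_1
    by (rule same_side_pairs_balanced) (use that left_count_le[of 1 p q n up] in simp)
  have "crossings n up + 3 * (n choose 4) = (\<Sum>q=1..n. \<Sum>p=1..<q. same_side_pairs n (left_count up 1 n p q))"
    by (rule crossings_add_choose4)
  also have "\<dots> = (\<Sum>q=1..n. \<Sum>p=1..<q. same_side_pairs n K + 2 * ((K - ?k p q) choose 2) + ?c * (K - ?k p q))"
    using balanced by (intro sum.cong refl) auto
  also have "\<dots> = (\<Sum>q=1..n. \<Sum>p=1..<q. same_side_pairs n K)
      + 2 * (\<Sum>q=1..n. \<Sum>p=1..<q. (K - ?k p q) choose 2) + ?c * (\<Sum>q=1..n. \<Sum>p=1..<q. K - ?k p q)"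
    by (simp only: sum.distrib sum_distrib_left)
  also have "(\<Sum>q=1..n. \<Sum>p=1..<q. (K - ?k p q) choose 2) = (\<Sum>q=1..n. \<Sum>p=1..<q. \<Sum>u<K. u - ?k p q)"
    by (simp add: sum_lessThan_diff_eq_choose2)
  also have "\<dots> = (\<Sum>q=1..n. \<Sum>u<K. \<Sum>p=1..<q. u - ?k p q)"
    by (rule sum.cong[OF refl], rule sum.swap)
  also have "\<dots> = (\<Sum>u<K. k_deficit up u 1 n)"
    unfolding k_deficit_def by (rule sum.swap)
  also have "(\<Sum>q=1..n. \<Sum>p=1..<q. same_side_pairs n K) = (n choose 2) * same_side_pairs n K"
    by (rule sum_pairs_const)
  also have "(\<Sum>q=1..n. \<Sum>p=1..<q. K - ?k p q) = k_deficit up K 1 n"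
    unfolding k_deficit_def ..
  finally show ?thesis .
qed

lemma Z_even:
  assumes "1 \<le> h"
  shows "4 * Z (2 * h + 2) + 12 * real ((2 * h + 2) choose 4) = real (4 * ((2 * h + 2) choose 2) * (2 * (h choose 2))
           + (h - 1) * h * (h + 1) * (h + 2) + 2 * (h * (h + 1) * (h + 2)))"
proof -
  have div: "(2 * h + 2) div 2 = h + 1" "(2 * h + 2 - 1) div 2 = h" "(2 * h + 2 - 2) div 2 = h"
    "(2 * h + 2 - 3) div 2 = h - 1"
    using assms by auto
  have "real (h - 1) = real h - 1"
    using assms by simp
  then show ?thesis
    unfolding Z_def div by (simp add: choose2_real choose4_real field_simps)
qed

lemma Z_odd:
  "4 * Z (2 * h + 3) + 12 * real ((2 * h + 3) choose 4) = real (4 * ((2 * h + 3) choose 2) * ((h choose 2) + ((h + 1) choose 2))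
     + (h - 1) * h * (h + 1) * (h + 2) + 2 * 2 * (h * (h + 1) * (h + 2)))"
proof (cases "h = 0")
  case False
  have div: "(2 * h + 3) div 2 = h + 1" "(2 * h + 3 - 1) div 2 = h + 1" "(2 * h + 3 - 2) div 2 = h"
    "(2 * h + 3 - 3) div 2 = h"
    by auto
  have "real (h - 1) = real h - 1"
    using False by simp
  then show ?thesis
    unfolding Z_def div by (simp add: choose2_real choose4_real field_simps)
qed (simp add: Z_def choose2_real choose4_real)

lemma Z_eq_balanced:
  assumes "3 \<le> n"
  defines "K \<equiv> (n - 2) div 2"
  shows "4 * Z n + 12 * real (n choose 4) = real (4 * (n choose 2) * same_side_pairs n K
           + (K - 1) * K * (K + 1) * (K + 2) + 2 * (n - 2 - 2 * K + 1) * (K * (K + 1) * (K + 2)))"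
proof (cases "even n")
  case True
  then have "n = 2 * K + 2" and "1 \<le> K"
    using assms(1) unfolding K_def by presburger+
  then show ?thesis
    using Z_even[OF \<open>1 \<le> K\<close>] by (simp add: same_side_pairs_def)
next
  case False
  then have "n = 2 * K + 3"
    using assms(1) unfolding K_def by presburger
  then show ?thesis
    using Z_odd[of K] by (simp add: same_side_pairs_def)
qed

lemma Z_less_crossings_if_unbalanced:
  assumes "3 \<le> n" "n div 2 \<le> p" "p < q" "q + (n div 2 - 1) \<le> n"
    and "edge_k up 1 n p q < n div 2 - 1"
  shows "Z n < real (crossings n up)"
proof -
  define K where "K = (n - 2) div 2"
  define c where "c = n - 2 - 2 * K + 1"
  define S where "S = (\<Sum>u<K. k_deficit up u 1 n)"
  have K: "n div 2 - 1 = K"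
    unfolding K_def using assms(1) by linarith
  have low: "(K - 1) * K * (K + 1) * (K + 2) \<le> 8 * S"
    unfolding S_def K_def by (rule sum_k_deficit_lower_bound) simp
  have "1 + K \<le> p" "q + K \<le> n" "2 * K \<le> n - 1"
    using assms(1-4) unfolding K[symmetric] by presburger+
  moreover have "edge_k up 1 n p q < K"
    using assms(5) K by simp
  ultimately have "K * (K + 1) * (K + 2) + 2 \<le> 2 * k_deficit up K 1 n"
    using k_deficit_lower_bound_strict[of K n 1 p q up] \<open>p < q\<close> by simp
  then have "2 * c * (K * (K + 1) * (K + 2) + 2) \<le> 2 * c * (2 * k_deficit up K 1 n)"
    by (rule mult_le_mono2)
  then have top: "2 * c * (K * (K + 1) * (K + 2)) + 4 * c \<le> 4 * c * k_deficit up K 1 n"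
    by (simp add: algebra_simps)
  define A where "A = 4 * (n choose 2) * same_side_pairs n K + (K - 1) * K * (K + 1) * (K + 2)
                         + 2 * c * (K * (K + 1) * (K + 2))"
  have "A + 4 * c \<le> 4 * (crossings n up + 3 * (n choose 4))"
    unfolding A_def crossings_eq_k_deficits K_def[symmetric] c_def[symmetric] S_def[symmetric]
    using low top by (simp add: algebra_simps)
  then have "real A + 4 * real c \<le> 4 * real (crossings n up) + 12 * real (n choose 4)"
    using of_nat_mono by fastforce
  moreover have "4 * Z n + 12 * real (n choose 4) = real A"
    using Z_eq_balanced[OF assms(1)] unfolding A_def K_def[symmetric] c_def[symmetric] .
  ultimately have "4 * Z n + 4 * real c \<le> 4 * real (crossings n up)"
    by linarith
  moreover have "1 \<le> c"
    unfolding c_def by simp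
  ultimately show ?thesis
    by linarith
qed

lemma halving_edge_if_edge_k_ge:
  assumes "1 \<le> p" "p < q" "q \<le> n" "n div 2 - 1 \<le> edge_k up 1 n p q"
  shows "halving_edge n up p q"
proof -
  define L where "L = left_count up 1 n p q"
  have "L \<le> n - 2" "n - 2 \<le> 2 * (n div 2 - 1) + 1"
    using left_count_le[OF assms(1-3), of up] assms unfolding L_def by auto
  moreover have "n div 2 - 1 \<le> min L (n - 2 - L)"
    using assms(4) unfolding edge_k_def L_def Suc_1 .
  ultimately have "L = n div 2 - 1 \<or> n - 2 - L = n div 2 - 1"
    by linarith
  then show ?thesis
    unfolding halving_edge_def is_k_edge_def card_left_of[OF assms(1-3)] card_right_of[OF assms(1-3)] L_def .
qed

theorem lemma16:
  fixes n :: nat and up :: "nat \<Rightarrow> nat \<Rightarrow> bool"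
  assumes "normalized_2page n up"
    and "crossing_optimal n up"
  shows "halving_edge n up (n div 2) ((n + 1) div 2 + 1)
       \<and> halving_edge n up (n div 2) (n div 2 + 1)
       \<and> halving_edge n up ((n + 1) div 2) ((n + 1) div 2 + 1)"
proof -
  have "3 \<le> n"
    using assms(1) unfolding normalized_2page_def by simp
  have halving: "halving_edge n up p q" if "n div 2 \<le> p" "p < q" "q + (n div 2 - 1) \<le> n" for p q
  proof (rule halving_edge_if_edge_k_ge)
    show "n div 2 - 1 \<le> edge_k up 1 n p q"
      using Z_less_crossings_if_unbalanced[OF \<open>3 \<le> n\<close> that] assms(2)
      unfolding crossing_optimal_def by (metis less_irrefl not_le)
  qed (use that \<open>3 \<le> n\<close> in auto)
  show ?thesis
    using \<open>3 \<le> n\<close> by (intro conjI halving) presburger+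
qed

end
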